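(* Let $n,t,k$ be integers with $n\geq 2t\geq 2$ and $k\geq 2$. Then \[C_k(n,t)\leq k^t A_k(n-2t,0^t),\] where $0^t$ denotes the word consisting of $t$ zeros.
   Context: Words are over $\Sigma_k=\{0,1,\ldots,k-1\}$. A border of a word $w$ is a non-empty word that is both a proper prefix and a proper suffix of $w$. A word $w$ is closed by a word $u$ if $u$ is a border of $w$ and $u$ occurs exactly twice in $w$ as a factor (overlapping occurrences counted). $C_k(n,t)$ denotes the number of words of length $n$ over $\Sigma_k$ that are closed by some word of length $t$. $A_k(m,v)$ denotes the number of words of length $m$ over $\Sigma_k$ that do not contain $v$ as a factor (for $m=0$ the empty word is counted). *)

theory Defs
  imports Main "HOL-Library.Sublist"
begin

definition words :: "nat \<Rightarrow> nat \<Rightarrow> nat list set" where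
  "words k n = {w. length w = n \<and> set w \<subseteq> {..<k}}"

(* number of occurrences of u as a factor of w (overlapping occurrences counted) *)
definition occ :: "nat list \<Rightarrow> nat list \<Rightarrow> nat" where
  "occ u w = card {i. i + length u \<le> length w \<and> take (length u) (drop i w) = u}"

definition is_border :: "nat list \<Rightarrow> nat list \<Rightarrow> bool" where
  "is_border u w \<longleftrightarrow> u \<noteq> [] \<and> length u < length w \<and> prefix u w \<and> suffix u w"

definition closed_by :: "nat list \<Rightarrow> nat list \<Rightarrow> bool" where
  "closed_by w u \<longleftrightarrow> is_border u w \<and> occ u w = 2"

definition C :: "nat \<Rightarrow> nat \<Rightarrow> nat \<Rightarrow> nat" where
  "C k n t = card {w \<in> words k n. \<exists>u. length u = t \<and> closed_by w u}"

definition A :: "nat \<Rightarrow> nat \<Rightarrow> nat list \<Rightarrow> nat" where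
  "A k m v = card {w \<in> words k m. \<not> sublist v w}"

end

theory Submission
  imports Defs
begin

text \<open>
  A word closed by u of length t, with n \<ge> 2t, has the form u z u where z avoids u
  (an occurrence of u in z would be a third one), so C k n t is at most the sum of
  A k (n - 2t) u over all u of length t. It remains to see that 0^t is the easiest word
  of length t to avoid: A k m u \<le> A k m 0^t.

  A word w of length m \<ge> t avoiding u ends as x c s, where s is the longest suffix of w
  that is a proper suffix of u and the letter c does not extend s within u. Counting
  these factorisations gives A k m u \<le> \<Sum>l<t. (k - 1) A k (m - l - 1) u. For u = 0^t
  the factorisation x c 0^l (with c \<noteq> 0) is unique and every such word avoids 0^t when
  x does, so the reverse inequality holds, and induction on m compares the two.
\<close>

lemma words_iff: "w \<in> words k n \<longleftrightarrow> length w = n \<and> set w \<subseteq> {..<k}"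
  by (simp add: words_def)

lemma finite_words: "finite (words k n)"
  using finite_lists_length_eq[of "{..<k}" n] by (simp add: words_def conj_commute)

lemma card_words: "card (words k n) = k ^ n"
  using card_lists_length_eq[of "{..<k}" n] by (simp add: words_def conj_commute)

definition avoiding :: "nat \<Rightarrow> nat \<Rightarrow> nat list \<Rightarrow> nat list set" where
  "avoiding k m v = {w \<in> words k m. \<not> sublist v w}"

lemma finite_avoiding: "finite (avoiding k m v)"
  by (simp add: avoiding_def finite_words)

lemma A_eq_card_avoiding: "A k m v = card (avoiding k m v)"
  by (simp add: A_def avoiding_def)

lemma append_nonzero_replicate_inj:
  fixes c c' :: nat
  assumes "c \<noteq> 0" "c' \<noteq> 0" "x @ c # replicate a 0 = x' @ c' # replicate b 0"
  shows "x = x' \<and> c = c' \<and> a = b"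
proof -
  have leading_zeros: "takeWhile ((=) 0) (replicate e 0 @ d # y) = replicate e 0"
    if "d \<noteq> 0" for y and d :: nat and e
    using that by (induction e) auto
  have "replicate a 0 @ c # rev x = replicate b 0 @ c' # rev x'"
    using arg_cong[OF assms(3), of rev] by simp
  then have "a = b"
    using leading_zeros[OF assms(1), of a "rev x"] leading_zeros[OF assms(2), of b "rev x'"]
    by (metis length_replicate)
  then show ?thesis using assms(3) by simp
qed

lemma sublist_append_Cons_notin:
  assumes "sublist v (xs @ a # ys)" "a \<notin> set v"
  shows "sublist v xs \<or> sublist v ys"
  using assms unfolding sublist_append[of v xs "a # ys"] sublist_Cons_right
  by (auto simp: prefix_Cons)

lemma not_suffix_decomp:
  assumes "\<not> suffix u w" "length u \<le> length w"
  obtains x c l where "l < length u" "w = x @ c # drop (length u - l) u"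
    "c \<noteq> u ! (length u - Suc l)"
proof -
  obtain s u' w' where u: "u = u' @ s" and w: "w = w' @ s"
    and diff: "u' = [] \<or> w' = [] \<or> last u' \<noteq> last w'"
    using longest_common_suffix[of u w] by blast
  have "u' \<noteq> []" using assms(1) u w by auto
  moreover have "w' \<noteq> []" using assms(2) u w \<open>u' \<noteq> []\<close> by auto
  ultimately have "last u' \<noteq> last w'" using diff by blast
  have "u ! (length u - Suc (length s)) = last u'"
    using u \<open>u' \<noteq> []\<close> by (simp add: last_conv_nth nth_append)
  moreover have "w = butlast w' @ last w' # drop (length u - length s) u"
    using u w \<open>w' \<noteq> []\<close> by simp
  ultimately show thesis
    using that[of "length s"] u \<open>u' \<noteq> []\<close> \<open>last u' \<noteq> last w'\<close> by auto
qed

definition mismatch_triples :: "nat \<Rightarrow> nat \<Rightarrow> nat list \<Rightarrow> (nat \<times> nat \<times> nat list) set" where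
  "mismatch_triples k m u =
     (SIGMA l:{..<length u}. ({..<k} - {u ! (length u - Suc l)}) \<times> avoiding k (m - Suc l) u)"

definition mismatch_word :: "nat list \<Rightarrow> nat \<times> nat \<times> nat list \<Rightarrow> nat list" where
  "mismatch_word u = (\<lambda>(l, c, x). x @ c # drop (length u - l) u)"

lemma finite_mismatch_triples: "finite (mismatch_triples k m u)"
  by (simp add: mismatch_triples_def finite_avoiding)

lemma card_mismatch_triples:
  assumes "set u \<subseteq> {..<k}"
  shows "card (mismatch_triples k m u) = (\<Sum>l<length u. (k - 1) * A k (m - Suc l) u)"
proof -
  have "u ! (length u - Suc l) < k" if "l < length u" for l
    using that subsetD[OF assms nth_mem[of "length u - Suc l" u]] by auto
  then show ?thesis
    by (simp add: mismatch_triples_def card_cartesian_product A_eq_card_avoiding finite_avoiding)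
qed

lemma avoiding_subset_mismatch_words:
  assumes "length u \<le> m"
  shows "avoiding k m u \<subseteq> mismatch_word u ` mismatch_triples k m u"
proof
  fix w assume "w \<in> avoiding k m u"
  then have w: "length w = m" "set w \<subseteq> {..<k}" "\<not> sublist u w"
    by (auto simp: avoiding_def words_iff)
  then obtain x c l where l: "l < length u" and wx: "w = x @ c # drop (length u - l) u"
    and c: "c \<noteq> u ! (length u - Suc l)"
    using not_suffix_decomp[of u w] assms suffix_imp_sublist by blast
  have "\<not> sublist u x"
    using w(3) unfolding wx by (meson sublist_append_rightI sublist_order.order_trans)
  then have "x \<in> avoiding k (m - Suc l) u"
    using w wx l by (auto simp: avoiding_def words_iff)
  then have "(l, c, x) \<in> mismatch_triples k m u"
    using w wx l c by (auto simp: mismatch_triples_def)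
  then show "w \<in> mismatch_word u ` mismatch_triples k m u"
    using wx by (force simp: mismatch_word_def)
qed

lemma inj_on_mismatch_word_zeros:
  "inj_on (mismatch_word (replicate t 0)) (mismatch_triples k m (replicate t 0))"
proof (rule inj_onI)
  fix p q
  assume "p \<in> mismatch_triples k m (replicate t 0)" "q \<in> mismatch_triples k m (replicate t 0)"
    and eq: "mismatch_word (replicate t 0) p = mismatch_word (replicate t 0) q"
  obtain l c x l' c' x' where p: "p = (l, c, x)" and q: "q = (l', c', x')"
    by (cases p, cases q) blast
  have "c \<noteq> 0" "c' \<noteq> 0" "l < t" "l' < t"
    using \<open>p \<in> _\<close> \<open>q \<in> _\<close> by (auto simp: p q mismatch_triples_def)
  moreover have "x @ c # replicate l 0 = x' @ c' # replicate l' 0"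
    using eq \<open>l < t\<close> \<open>l' < t\<close> by (simp add: p q mismatch_word_def)
  ultimately show "p = q"
    using append_nonzero_replicate_inj p q by blast
qed

lemma mismatch_words_zeros_subset:
  assumes "t \<le> m"
  shows "mismatch_word (replicate t 0) ` mismatch_triples k m (replicate t 0)
    \<subseteq> avoiding k m (replicate t 0)"
proof clarify
  fix l c x assume "(l, c, x) \<in> mismatch_triples k m (replicate t 0)"
  then have l: "l < t" and c: "c < k" "c \<noteq> 0" and x: "x \<in> avoiding k (m - Suc l) (replicate t 0)"
    by (auto simp: mismatch_triples_def)
  have "\<not> sublist (replicate t 0) (replicate l (0::nat))"
    using l sublist_length_le by fastforce
  then have "\<not> sublist (replicate t 0) (x @ c # replicate l 0)"
    using sublist_append_Cons_notin[of "replicate t 0" x c] c x by (auto simp: avoiding_def)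
  then show "mismatch_word (replicate t 0) (l, c, x) \<in> avoiding k m (replicate t 0)"
    using assms l c x by (auto simp: mismatch_word_def avoiding_def words_iff)
qed

lemma A_le_sum_A:
  assumes "length u \<le> m" "set u \<subseteq> {..<k}"
  shows "A k m u \<le> (\<Sum>l<length u. (k - 1) * A k (m - Suc l) u)"
proof -
  have "A k m u \<le> card (mismatch_word u ` mismatch_triples k m u)"
    unfolding A_eq_card_avoiding using avoiding_subset_mismatch_words[OF assms(1)]
    by (intro card_mono finite_imageI finite_mismatch_triples)
  also have "\<dots> \<le> card (mismatch_triples k m u)"
    by (rule card_image_le[OF finite_mismatch_triples])
  finally show ?thesis using card_mismatch_triples[OF assms(2)] by simp
qed

lemma sum_A_replicate_zero_le:
  assumes "t \<le> m"
  shows "(\<Sum>l<t. (k - 1) * A k (m - Suc l) (replicate t 0)) \<le> A k m (replicate t 0)"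
proof (cases "k = 0")
  case False
  then have "set (replicate t 0) \<subseteq> {..<k}" by auto
  then have "(\<Sum>l<t. (k - 1) * A k (m - Suc l) (replicate t 0))
      = card (mismatch_triples k m (replicate t 0))"
    using card_mismatch_triples by simp
  also have "\<dots> = card (mismatch_word (replicate t 0) ` mismatch_triples k m (replicate t 0))"
    by (rule card_image[OF inj_on_mismatch_word_zeros, symmetric])
  also have "\<dots> \<le> A k m (replicate t 0)"
    unfolding A_eq_card_avoiding using mismatch_words_zeros_subset[OF assms]
    by (intro card_mono finite_avoiding)
  finally show ?thesis .
qed simp

lemma A_le_A_replicate_zero:
  assumes "set u \<subseteq> {..<k}"
  shows "A k m u \<le> A k m (replicate (length u) 0)"
proof (induction m rule: less_induct)
  case (less m)
  show ?case
  proof (cases "length u \<le> m")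
    case False
    then have "avoiding k m u = avoiding k m (replicate (length u) 0)"
      by (auto simp: avoiding_def words_iff dest: sublist_length_le)
    then show ?thesis by (simp add: A_eq_card_avoiding)
  next
    case True
    have "A k m u \<le> (\<Sum>l<length u. (k - 1) * A k (m - Suc l) u)"
      using A_le_sum_A[OF True assms] .
    also have "\<dots> \<le> (\<Sum>l<length u. (k - 1) * A k (m - Suc l) (replicate (length u) 0))"
      using True by (intro sum_mono mult_left_mono less) auto
    also have "\<dots> \<le> A k m (replicate (length u) 0)"
      using sum_A_replicate_zero_le[of "length u" m k] True by simp
    finally show ?thesis .
  qed
qed

lemma occ_ge_3_if_inner_sublist:
  assumes "u \<noteq> []" "sublist u z"
  shows "3 \<le> occ u (u @ z @ u)"
proof -
  obtain p q where z: "z = p @ u @ q" using assms(2) unfolding sublist_def by blast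
  let ?w = "u @ z @ u"
  let ?S = "{i. i + length u \<le> length ?w \<and> take (length u) (drop i ?w) = u}"
  have "0 \<in> ?S" by simp
  moreover have "length u + length p \<in> ?S" by (simp add: z)
  moreover have "length u + length z \<in> ?S" by simp
  ultimately have "{0, length u + length p, length u + length z} \<subseteq> ?S" by blast
  moreover have "finite ?S"
    by (rule finite_subset[of _ "{..length ?w}"]) auto
  ultimately have "card {0, length u + length p, length u + length z} \<le> occ u ?w"
    unfolding occ_def by (rule card_mono[rotated])
  moreover have "card {0, length u + length p, length u + length z} = 3"
    using z assms(1) by simp
  ultimately show ?thesis by simp
qed

lemma closed_by_decomp:
  assumes "closed_by w u" "2 * length u \<le> length w"
  obtains z where "w = u @ z @ u" "\<not> sublist u z"
proof -
  have "prefix u w" "suffix u w" "u \<noteq> []" "occ u w = 2"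
    using assms(1) by (auto simp: closed_by_def is_border_def)
  obtain r where r: "w = u @ r"
    using \<open>prefix u w\<close> by (auto simp: prefix_def)
  have "suffix u r"
    using \<open>suffix u w\<close> assms(2) unfolding r suffix_append by auto
  then obtain z where z: "r = z @ u"
    by (auto simp: suffix_def)
  have "\<not> sublist u z"
    using occ_ge_3_if_inner_sublist[OF \<open>u \<noteq> []\<close>, of z] \<open>occ u w = 2\<close> by (auto simp: r z)
  then show thesis
    using that r z by simp
qed

lemma closed_words_subset:
  assumes "2 * t \<le> n"
  shows "{w \<in> words k n. \<exists>u. length u = t \<and> closed_by w u}
    \<subseteq> (\<lambda>(u, z). u @ z @ u) ` (SIGMA u:words k t. avoiding k (n - 2 * t) u)"
proof
  fix w assume "w \<in> {w \<in> words k n. \<exists>u. length u = t \<and> closed_by w u}"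
  then obtain u where w: "w \<in> words k n" and u: "length u = t" "closed_by w u"
    by blast
  then obtain z where wz: "w = u @ z @ u" and "\<not> sublist u z"
    using assms closed_by_decomp[of w u] by (auto simp: words_iff)
  then have "(u, z) \<in> (SIGMA u:words k t. avoiding k (n - 2 * t) u)"
    using w u by (auto simp: avoiding_def words_iff)
  then show "w \<in> (\<lambda>(u, z). u @ z @ u) ` (SIGMA u:words k t. avoiding k (n - 2 * t) u)"
    using wz by force
qed

theorem lemma7:
  fixes n t k :: nat
  assumes "n \<ge> 2 * t" and "2 * t \<ge> 2" and "k \<ge> 2"
  shows "C k n t \<le> k ^ t * A k (n - 2 * t) (replicate t 0)"
proof -
  let ?m = "n - 2 * t"
  let ?pairs = "SIGMA u:words k t. avoiding k ?m u"
  have fin: "finite ?pairs" by (simp add: finite_words finite_avoiding)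
  have "C k n t \<le> card ((\<lambda>(u, z). u @ z @ u) ` ?pairs)"
    unfolding C_def using closed_words_subset[OF assms(1)] fin by (intro card_mono) auto
  also have "\<dots> \<le> card ?pairs"
    using fin by (rule card_image_le)
  also have "\<dots> = (\<Sum>u\<in>words k t. A k ?m u)"
    by (simp add: A_eq_card_avoiding finite_words finite_avoiding)
  also have "\<dots> \<le> (\<Sum>u\<in>words k t. A k ?m (replicate t 0))"
    by (intro sum_mono) (auto simp: words_iff dest: A_le_A_replicate_zero)
  also have "\<dots> = k ^ t * A k ?m (replicate t 0)"
    by (simp add: card_words)
  finally show ?thesis .
qed

end
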